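(* Let $k_0>0$, $L>0$, $\mathbf n\in C^1([0,L],\mathbb{S}^2)$ and $\alpha\in C^1[0,L]$. Define $\mathbf e(t)=R_{\mathbf n(t),\alpha(t)}\mathbf e_3$ for $t\in[0,L]$, where $\mathbf e_3=(0,0,1)^\top$. Let $\mathbf y\in\mathbb{R}^3$ with $\|\mathbf y\|<\sqrt2\,k_0$, and let $t\in[0,L]$. Then there exist $k_1,k_2$ with $(k_1,k_2,t)\in\mathcal U$ and $T_+(k_1,k_2,t)=\mathbf y$ if and only if $$\mathbf y\cdot\mathbf e(t)=-\frac{\|\mathbf y\|^2}{2k_0}.$$ Moreover, $\operatorname{Card}(T_+^{-1}(\mathbf y))$ equals the number of solutions $t\in[0,L]$ of this equation.
   Context: $\mathbb{S}^2$ is the unit sphere in $\mathbb{R}^3$. For a unit vector $\mathbf n$ and angle $\alpha$, $R_{\mathbf n,\alpha}\mathbf y=(1-\cos\alpha)(\mathbf n\cdot\mathbf y)\mathbf n+\cos\alpha\,\mathbf y-\sin\alpha\,(\mathbf n\times\mathbf y)$. $\kappa=\kappa(k_1,k_2)=\sqrt{k_0^2-k_1^2-k_2^2}$. $\mathcal U=\{(k_1,k_2,t)\in\mathbb{R}^3:k_1^2+k_2^2<k_0^2,\ 0\le t\le L\}$, $T_+:\mathcal U\to\mathbb{R}^3$, $T_+(k_1,k_2,t)=R_{\mathbf n(t),\alpha(t)}(k_1,k_2,\kappa-k_0)^\top$, and $\operatorname{Card}(T_+^{-1}(\mathbf y))$ is the number of points of $\mathcal U$ mapped by $T_+$ to $\mathbf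 y$. *)

theory Defs
  imports "HOL-Analysis.Analysis" "HOL-Library.Extended_Nat"
begin

definition C1_on :: "(real \<Rightarrow> 'a::real_normed_vector) \<Rightarrow> real set \<Rightarrow> bool" where
  "C1_on f S \<longleftrightarrow>
     (\<exists>D. (\<forall>x\<in>S. (f has_vector_derivative D x) (at x within S)) \<and> continuous_on S D)"

definition rot :: "real^3 \<Rightarrow> real \<Rightarrow> real^3 \<Rightarrow> real^3" where
  "rot n a y = ((1 - cos a) * (n \<bullet> y)) *\<^sub>R n + cos a *\<^sub>R y - sin a *\<^sub>R cross3 n y"

definition kappa :: "real \<Rightarrow> real \<Rightarrow> real \<Rightarrow> real" where
  "kappa k0 k1 k2 = sqrt (k0\<^sup>2 - k1\<^sup>2 - k2\<^sup>2)"

definition Uset :: "real \<Rightarrow> real \<Rightarrow> (real \<times> real \<times> real) set" where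
  "Uset k0 L = {(k1, k2, t). k1\<^sup>2 + k2\<^sup>2 < k0\<^sup>2 \<and> 0 \<le> t \<and> t \<le> L}"

definition Tplus :: "real \<Rightarrow> (real \<Rightarrow> real^3) \<Rightarrow> (real \<Rightarrow> real) \<Rightarrow> real \<times> real \<times> real \<Rightarrow> real^3" where
  "Tplus k0 n \<alpha> p = (case p of (k1, k2, t) \<Rightarrow>
      rot (n t) (\<alpha> t) (vector [k1, k2, kappa k0 k1 k2 - k0]))"

definition e3 :: "real^3" where "e3 = vector [0, 0, 1]"

definition ecard :: "'a set \<Rightarrow> enat" where
  "ecard A = (if finite A then enat (card A) else \<infinity>)"

end

theory Submission
  imports Defs
begin

text \<open>For a unit axis \<open>n\<close>, \<open>rot n a\<close> is an orthogonal map with inverse \<open>rot n (-a)\<close>, and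
  \<open>(k\<^sub>1, k\<^sub>2) \<mapsto> (k\<^sub>1, k\<^sub>2, \<kappa> - k\<^sub>0)\<close> maps the open disc of radius \<open>k\<^sub>0\<close> bijectively onto the upper
  open hemisphere of the sphere \<open>\<parallel>x + k\<^sub>0 e\<^sub>3\<parallel> = k\<^sub>0\<close>, that is, onto the points with
  \<open>x \<bullet> e\<^sub>3 = -\<parallel>x\<parallel>\<^sup>2 / (2 k\<^sub>0)\<close> and \<open>\<parallel>x\<parallel> < \<surd>2 k\<^sub>0\<close>. So for fixed \<open>t\<close> the map \<open>T\<^sub>+(\<cdot>, \<cdot>, t)\<close> is
  injective, and \<open>y\<close> is in its image iff the sphere equation holds for \<open>R(t)\<^sup>-\<^sup>1 y\<close>, which is the
  stated equation between \<open>y\<close> and \<open>e(t)\<close>. Projecting the fibre of \<open>T\<^sub>+\<close> over \<open>y\<close> to its time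
  coordinate is therefore a bijection onto the solution set.\<close>

lemma inner_cross3_left: "cross3 n u \<bullet> v = - (u \<bullet> cross3 n v)"
  by (simp add: cross3_def inner_vec_def sum_3 vector_3 algebra_simps)

lemma cross3_cross3: "cross3 n (cross3 n x) = (n \<bullet> x) *\<^sub>R n - (n \<bullet> n) *\<^sub>R x"
  by (simp add: cross3_def vec_eq_iff forall_3 inner_vec_def sum_3 vector_3 algebra_simps)

lemma rot_adjoint: "rot n a u \<bullet> v = u \<bullet> rot n (-a) v"
  unfolding rot_def
  by (simp add: inner_add_left inner_diff_left inner_add_right inner_diff_right inner_cross3_left)
     (simp add: inner_commute)

lemma inner_axis_rot:
  assumes "norm n = 1"
  shows "n \<bullet> rot n a x = n \<bullet> x"
proof -
  have "n \<bullet> n = 1" using assms by (simp add: norm_eq_1)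
  then show ?thesis
    unfolding rot_def by (simp add: inner_diff_right inner_add_right dot_cross_self algebra_simps)
qed

lemma cross3_axis_rot:
  assumes "norm n = 1"
  shows "cross3 n (rot n a x) = cos a *\<^sub>R cross3 n x - sin a *\<^sub>R ((n \<bullet> x) *\<^sub>R n - x)"
proof -
  have "n \<bullet> n = 1" using assms by (simp add: norm_eq_1)
  then show ?thesis
    unfolding rot_def by (simp add: cross_add_right Cross3.right_diff_distrib cross_mult_right cross3_cross3)
qed

lemma rot_inverse:
  assumes "norm n = 1"
  shows "rot n (-a) (rot n a x) = x"
proof -
  have pythagoras: "cos a * (cos a * c) + sin a * (sin a * c) = c" for c
    by (metis distrib_right mult.assoc mult.left_neutral sin_cos_squared_add3)
  have "rot n (-a) (rot n a x)
      = ((1 - cos a) * (n \<bullet> x)) *\<^sub>R n + cos a *\<^sub>R rot n a x + sin a *\<^sub>R cross3 n (rot n a x)"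
    unfolding rot_def[of n "-a"] using inner_axis_rot[OF assms] by simp
  also have "\<dots> = x"
    unfolding cross3_axis_rot[OF assms] unfolding rot_def
    by (simp add: vec_eq_iff algebra_simps pythagoras)
  finally show ?thesis .
qed

lemma rot_eq_iff:
  assumes "norm n = 1"
  shows "rot n a x = y \<longleftrightarrow> x = rot n (-a) y"
  using rot_inverse[OF assms, of a] rot_inverse[OF assms, of "-a"] by auto

lemma inner_rot_rot:
  assumes "norm n = 1"
  shows "rot n a x \<bullet> rot n a z = x \<bullet> z"
  by (simp add: rot_adjoint rot_inverse assms)

lemma norm_rot:
  assumes "norm n = 1"
  shows "norm (rot n a x) = norm x"
  using inner_rot_rot[OF assms] by (simp add: norm_eq_sqrt_inner)

definition hemisphere_point :: "real \<Rightarrow> real \<Rightarrow> real \<Rightarrow> real^3" where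
  "hemisphere_point k0 k1 k2 = vector [k1, k2, kappa k0 k1 k2 - k0]"

lemma hemisphere_point_eq_iff:
  "hemisphere_point k0 a b = hemisphere_point k0 a' b' \<longleftrightarrow> a = a' \<and> b = b'"
  unfolding hemisphere_point_def by (metis vector_3(1,2))

lemma inner_e3: "x \<bullet> e3 = x$3"
  by (simp add: e3_def inner_vec_def sum_3 vector_3)

lemma norm_power2_vec3: "(norm (x::real^3))\<^sup>2 = (x$1)\<^sup>2 + (x$2)\<^sup>2 + (x$3)\<^sup>2"
  unfolding power2_norm_eq_inner by (simp add: inner_vec_def sum_3 power2_eq_square)

lemma hemisphere_point_sphere:
  assumes "k0 > 0" "k1\<^sup>2 + k2\<^sup>2 < k0\<^sup>2"
  shows "hemisphere_point k0 k1 k2 \<bullet> e3 = - (norm (hemisphere_point k0 k1 k2))\<^sup>2 / (2 * k0)"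
proof -
  define K where "K = kappa k0 k1 k2"
  have "K\<^sup>2 = k0\<^sup>2 - k1\<^sup>2 - k2\<^sup>2"
    unfolding K_def kappa_def using assms(2) by simp
  moreover have "(norm (hemisphere_point k0 k1 k2))\<^sup>2 = k1\<^sup>2 + k2\<^sup>2 + (K - k0)\<^sup>2"
    by (simp add: norm_power2_vec3 hemisphere_point_def vector_3 K_def)
  ultimately have "(norm (hemisphere_point k0 k1 k2))\<^sup>2 = 2 * k0 * (k0 - K)"
    by (simp add: power2_eq_square algebra_simps)
  then show ?thesis
    using assms(1) by (simp add: inner_e3 hemisphere_point_def vector_3 K_def)
qed

lemma sphere_hemisphere_point:
  assumes "k0 > 0" "x \<bullet> e3 = - (norm x)\<^sup>2 / (2 * k0)" "norm x < sqrt 2 * k0"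
  shows "(x$1)\<^sup>2 + (x$2)\<^sup>2 < k0\<^sup>2" "hemisphere_point k0 (x$1) (x$2) = x"
proof -
  have "(norm x)\<^sup>2 < (sqrt 2 * k0)\<^sup>2"
    using assms(3) by (simp add: power_strict_mono)
  then have norm_bound: "(norm x)\<^sup>2 < 2 * k0\<^sup>2"
    by (simp add: power_mult_distrib)
  have x3: "2 * k0 * x$3 = - (norm x)\<^sup>2"
    using assms(1,2) by (simp add: inner_e3 field_simps)
  have "2 * k0 * (x$3 + k0) > 0"
    using x3 norm_bound by (simp add: algebra_simps power2_eq_square)
  then have upper: "x$3 + k0 > 0"
    using assms(1) by (simp add: zero_less_mult_iff)
  have sphere: "k0\<^sup>2 - (x$1)\<^sup>2 - (x$2)\<^sup>2 = (x$3 + k0)\<^sup>2"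
    using x3 norm_power2_vec3[of x] by (simp add: algebra_simps power2_eq_square)
  then show "(x$1)\<^sup>2 + (x$2)\<^sup>2 < k0\<^sup>2"
    using upper by (smt (verit) zero_less_power)
  have "kappa k0 (x$1) (x$2) = x$3 + k0"
    unfolding kappa_def sphere using upper by simp
  then show "hemisphere_point k0 (x$1) (x$2) = x"
    by (simp add: hemisphere_point_def vec_eq_iff forall_3 vector_3)
qed

lemma rot_hemisphere_iff:
  assumes "k0 > 0" "norm n = 1" "norm y < sqrt 2 * k0"
  shows "(\<exists>k1 k2. k1\<^sup>2 + k2\<^sup>2 < k0\<^sup>2 \<and> rot n a (hemisphere_point k0 k1 k2) = y)
           \<longleftrightarrow> y \<bullet> rot n a e3 = - (norm y)\<^sup>2 / (2 * k0)"
proof -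
  define x where "x = rot n (-a) y"
  have "norm x = norm y" and "x \<bullet> e3 = y \<bullet> rot n a e3"
    unfolding x_def by (simp_all add: norm_rot assms(2) rot_adjoint)
  then show ?thesis
    unfolding rot_eq_iff[OF assms(2)] x_def[symmetric]
    using hemisphere_point_sphere[OF assms(1)] sphere_hemisphere_point[OF assms(1), of x] assms(3)
    by metis
qed

lemma Tplus_eq: "Tplus k0 n \<alpha> (k1, k2, t) = rot (n t) (\<alpha> t) (hemisphere_point k0 k1 k2)"
  by (simp add: Tplus_def hemisphere_point_def)

lemma bij_betw_Tplus_fibre_time:
  assumes "\<forall>t\<in>{0..L}. norm (n t) = 1"
  shows "bij_betw (\<lambda>(k1, k2, t). t) {p \<in> Uset k0 L. Tplus k0 n \<alpha> p = y}
           {t \<in> {0..L}. \<exists>k1 k2. (k1, k2, t) \<in> Uset k0 L \<and> Tplus k0 n \<alpha> (k1, k2, t) = y}"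
proof (rule bij_betw_imageI)
  show "inj_on (\<lambda>(k1, k2, t). t) {p \<in> Uset k0 L. Tplus k0 n \<alpha> p = y}"
  proof (rule inj_onI)
    fix p q
    assume p: "p \<in> {p \<in> Uset k0 L. Tplus k0 n \<alpha> p = y}"
      and q: "q \<in> {p \<in> Uset k0 L. Tplus k0 n \<alpha> p = y}"
      and same_time: "(\<lambda>(k1, k2, t). t) p = (\<lambda>(k1, k2, t). t) q"
    obtain a b t a' b' where pq: "p = (a, b, t)" "q = (a', b', t)"
      using same_time by (cases p, cases q) auto
    have "norm (n t) = 1"
      using assms p pq by (simp add: Uset_def)
    moreover have
      "rot (n t) (\<alpha> t) (hemisphere_point k0 a b) = rot (n t) (\<alpha> t) (hemisphere_point k0 a' b')"
      using p q pq by (simp add: Tplus_eq)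
    ultimately have "hemisphere_point k0 a b = hemisphere_point k0 a' b'"
      by (simp add: rot_eq_iff rot_inverse)
    then show "p = q"
      using pq by (simp add: hemisphere_point_eq_iff)
  qed
qed (force simp: Uset_def)

lemma bij_betw_ecard_eq: "bij_betw f A B \<Longrightarrow> ecard A = ecard B"
  unfolding ecard_def by (simp add: bij_betw_finite bij_betw_same_card)

theorem proposition4p6:
  fixes k0 L :: real and n :: "real \<Rightarrow> real^3" and \<alpha> :: "real \<Rightarrow> real"
    and e :: "real \<Rightarrow> real^3" and y :: "real^3"
  assumes "k0 > 0" and "L > 0"
    and "C1_on n {0..L}" and "\<forall>t\<in>{0..L}. norm (n t) = 1"
    and "C1_on \<alpha> {0..L}"
    and "\<forall>t\<in>{0..L}. e t = rot (n t) (\<alpha> t) e3"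
    and "norm y < sqrt 2 * k0"
  shows "(\<forall>t\<in>{0..L}.
            (\<exists>k1 k2. (k1, k2, t) \<in> Uset k0 L \<and> Tplus k0 n \<alpha> (k1, k2, t) = y)
              \<longleftrightarrow> y \<bullet> e t = - (norm y)\<^sup>2 / (2 * k0))
         \<and> ecard {p \<in> Uset k0 L. Tplus k0 n \<alpha> p = y}
             = ecard {t \<in> {0..L}. y \<bullet> e t = - (norm y)\<^sup>2 / (2 * k0)}"
proof -
  have preimage_iff: "(\<exists>k1 k2. (k1, k2, t) \<in> Uset k0 L \<and> Tplus k0 n \<alpha> (k1, k2, t) = y)
      \<longleftrightarrow> y \<bullet> e t = - (norm y)\<^sup>2 / (2 * k0)" if "t \<in> {0..L}" for t
    using rot_hemisphere_iff[OF assms(1) _ assms(7), of "n t" "\<alpha> t"] assms(4,6) that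
    by (simp add: Uset_def Tplus_eq)
  then have "{t \<in> {0..L}. \<exists>k1 k2. (k1, k2, t) \<in> Uset k0 L \<and> Tplus k0 n \<alpha> (k1, k2, t) = y}
      = {t \<in> {0..L}. y \<bullet> e t = - (norm y)\<^sup>2 / (2 * k0)}"
    by blast
  then have "ecard {p \<in> Uset k0 L. Tplus k0 n \<alpha> p = y}
      = ecard {t \<in> {0..L}. y \<bullet> e t = - (norm y)\<^sup>2 / (2 * k0)}"
    using bij_betw_ecard_eq[OF bij_betw_Tplus_fibre_time[OF assms(4)]] by simp
  with preimage_iff show ?thesis
    by blast
qed

end
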